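(* Let $\Omega=\{1,\dots,m\}^{\mathbb{N}}$ with shift $\sigma$, let $\mathcal{M}$ be the set of Borel probabilities on $\Omega$ with the Monge–Kantorovich metric $d_{MK}$, and let $\mathfrak{T}:\mathcal{M}\to\mathcal{M}$ be the push-forward map $\mathfrak{T}(\mu)(E)=\mu(\sigma^{-1}(E))$. Given $\epsilon>0$, a probability $\tilde\mu_2\in\mathcal{M}$, and a $\sigma$-invariant probability $\tilde\mu_1\in\mathcal{M}$, there exist $\rho_1,\mu_2\in\mathcal{M}$ and an integer $N>0$ such that $d_{MK}(\rho_1,\tilde\mu_1)<\epsilon$, $d_{MK}(\mu_2,\tilde\mu_2)<\epsilon$, and $\mathfrak{T}^N(\rho_1)=\mu_2$.
   Context: $\Omega$ carries the metric $d_\Omega(\alpha,\beta)=0$ if $\alpha=\beta$ and $d_\Omega(\alpha,\beta)=2^{-k}$ where $k=\min\{i:\alpha_i\neq\beta_i\}$ otherwise. The Monge–Kantorovich metric on $\mathcal{M}$ is $d_{MK}(\mu,\nu)=\sup\{\int f\,d\mu-\int f\,d\nu : f:\Omega\to\mathbb{R}\ \text{1-Lipschitz}\}$. $\sigma(x_1,x_2,\dots)=(x_2,x_3,\dots)$. *)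

theory Defs
  imports "HOL-Probability.Probability"
begin

text \<open>Coordinate x i (i = 0,1,2,...) corresponds
  to the paper's x_(i+1). Omega is equipped with the product sigma algebra of the discrete
  spaces {1..m}, which is the Borel sigma algebra of the metric d_Omega.\<close>

definition Omega :: "nat \<Rightarrow> (nat \<Rightarrow> nat) set" where
  "Omega m = {x. \<forall>i. x i \<in> {1..m}}"

definition OmegaM :: "nat \<Rightarrow> (nat \<Rightarrow> nat) measure" where
  "OmegaM m = PiM UNIV (\<lambda>_. count_space {1..m})"

definition d_Omega :: "(nat \<Rightarrow> nat) \<Rightarrow> (nat \<Rightarrow> nat) \<Rightarrow> real" where
  "d_Omega a b = (if a = b then 0 else (1/2) ^ (Suc (LEAST i. a i \<noteq> b i)))"

definition shift :: "(nat \<Rightarrow> nat) \<Rightarrow> (nat \<Rightarrow> nat)" where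
  "shift x = (\<lambda>i. x (Suc i))"

definition probs :: "nat \<Rightarrow> (nat \<Rightarrow> nat) measure set" where
  "probs m = {\<mu>. prob_space \<mu> \<and> sets \<mu> = sets (OmegaM m)}"

definition lip1 :: "nat \<Rightarrow> ((nat \<Rightarrow> nat) \<Rightarrow> real) \<Rightarrow> bool" where
  "lip1 m f \<longleftrightarrow> (\<forall>x\<in>Omega m. \<forall>y\<in>Omega m. \<bar>f x - f y\<bar> \<le> d_Omega x y)"

definition d_MK :: "nat \<Rightarrow> (nat \<Rightarrow> nat) measure \<Rightarrow> (nat \<Rightarrow> nat) measure \<Rightarrow> real" where
  "d_MK m \<mu> \<nu> = Sup {(\<integral>x. f x \<partial>\<mu>) - (\<integral>x. f x \<partial>\<nu>) | f. lip1 m f}"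

definition pushT :: "nat \<Rightarrow> (nat \<Rightarrow> nat) measure \<Rightarrow> (nat \<Rightarrow> nat) measure" where
  "pushT m \<mu> = distr \<mu> (OmegaM m) shift"

definition shift_invariant :: "nat \<Rightarrow> (nat \<Rightarrow> nat) measure \<Rightarrow> bool" where
  "shift_invariant m \<mu> \<longleftrightarrow> pushT m \<mu> = \<mu>"

end

theory Submission
  imports Defs
begin

text \<open>Let \<open>\<rho>\<^sub>1\<close> be the law of the sequence that copies the first \<open>N\<close> symbols of a
  \<open>\<mu>\<^sub>1\<close>-random point and continues with an independent \<open>\<mu>\<^sub>2\<close>-random point.
  Shifting \<open>N\<close> times discards the prefix, so \<open>T\<^sup>N \<rho>\<^sub>1 = \<mu>\<^sub>2\<close>, and one may take
  \<open>\<mu>\<^sub>2\<close> itself as the second measure. The spliced point and the original one agree on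
  the first \<open>N\<close> coordinates, so this coupling moves no mass by more than \<open>2\<^sup>-\<^sup>N\<close>
  and \<open>d_MK(\<rho>\<^sub>1, \<mu>\<^sub>1) \<le> 2\<^sup>-\<^sup>N\<close>.\<close>

lemma space_OmegaM: "space (OmegaM m) = Omega m"
  by (auto simp: OmegaM_def space_PiM PiE_UNIV_domain Omega_def)

lemma measurable_component_OmegaM [measurable]:
  "(\<lambda>x. x i) \<in> OmegaM m \<rightarrow>\<^sub>M count_space {1..m}"
  unfolding OmegaM_def by (rule measurable_component_singleton) simp

lemma measurable_OmegaM:
  assumes "\<And>i. (\<lambda>x. f x i) \<in> M \<rightarrow>\<^sub>M count_space {1..m}"
    and "\<And>x. x \<in> space M \<Longrightarrow> f x \<in> Omega m"
  shows "f \<in> M \<rightarrow>\<^sub>M OmegaM m"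
  unfolding OmegaM_def
  by (rule measurable_PiM_single') (use assms in \<open>auto simp: Omega_def PiE_UNIV_domain\<close>)

lemma pred_component_eq_OmegaM:
  "Measurable.pred (OmegaM m) (\<lambda>x. x i = c)"
proof -
  have "(\<lambda>x. x i) -` ({c} \<inter> {1..m}) \<inter> space (OmegaM m) \<in> sets (OmegaM m)"
    by (rule measurable_sets[OF measurable_component_OmegaM]) auto
  moreover have "(\<lambda>x. x i) -` ({c} \<inter> {1..m}) \<inter> space (OmegaM m) = {x \<in> space (OmegaM m). x i = c}"
    by (auto simp: space_OmegaM Omega_def)
  ultimately show ?thesis unfolding pred_def by simp
qed

lemma measurable_prefix:
  "(\<lambda>x. map x [0..<n]) \<in> OmegaM m \<rightarrow>\<^sub>M count_space UNIV"
proof (rule measurable_count_space_eq2_countable[THEN iffD2], safe)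
  fix l :: "nat list"
  have "Measurable.pred (OmegaM m) (\<lambda>x. \<forall>i\<in>{..<n}. x i = l ! i)"
    by (rule pred_intros_finite(3)) (auto intro: pred_component_eq_OmegaM)
  then have "{x \<in> space (OmegaM m). length l = n \<and> (\<forall>i\<in>{..<n}. x i = l ! i)} \<in> sets (OmegaM m)"
    unfolding pred_def by (cases "length l = n") simp_all
  moreover have "map x [0..<n] = l \<longleftrightarrow> length l = n \<and> (\<forall>i\<in>{..<n}. x i = l ! i)" for x
    by (auto simp: list_eq_iff_nth_eq)
  ultimately have "{x \<in> space (OmegaM m). map x [0..<n] = l} \<in> sets (OmegaM m)"
    by simp
  moreover have "(\<lambda>x. map x [0..<n]) -` {l} \<inter> space (OmegaM m) = {x \<in> space (OmegaM m). map x [0..<n] = l}"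
    by blast
  ultimately show "(\<lambda>x. map x [0..<n]) -` {l} \<inter> space (OmegaM m) \<in> sets (OmegaM m)"
    by simp
qed simp

lemma funpow_shift: "(shift ^^ k) x = (\<lambda>i. x (i + k))"
  by (induction k arbitrary: x) (auto simp: shift_def)

lemma measurable_funpow_shift: "shift ^^ k \<in> OmegaM m \<rightarrow>\<^sub>M OmegaM m"
proof (rule measurable_OmegaM)
  show "(\<lambda>x. (shift ^^ k) x i) \<in> OmegaM m \<rightarrow>\<^sub>M count_space {1..m}" for i
    unfolding funpow_shift by (rule measurable_component_OmegaM)
qed (auto simp: funpow_shift space_OmegaM Omega_def)

lemma pushT_funpow:
  assumes "sets \<mu> = sets (OmegaM m)"
  shows "(pushT m ^^ k) \<mu> = distr \<mu> (OmegaM m) (shift ^^ k)"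
proof (induction k)
  case 0
  show ?case using distr_id2[OF assms[symmetric]] by simp
next
  case (Suc k)
  have "shift ^^ k \<in> \<mu> \<rightarrow>\<^sub>M OmegaM m"
    using measurable_funpow_shift measurable_cong_sets[OF assms refl] by blast
  then have "distr (distr \<mu> (OmegaM m) (shift ^^ k)) (OmegaM m) shift
      = distr \<mu> (OmegaM m) (shift \<circ> (shift ^^ k))"
    using measurable_funpow_shift[of 1] by (intro distr_distr) simp_all
  then show ?case using Suc.IH by (simp add: pushT_def comp_def)
qed

definition glue :: "nat \<Rightarrow> (nat \<Rightarrow> nat) \<Rightarrow> (nat \<Rightarrow> nat) \<Rightarrow> nat \<Rightarrow> nat" where
  "glue N x y = (\<lambda>i. if i < N then x i else y (i - N))"

lemma funpow_shift_glue: "(shift ^^ N) (glue N x y) = y"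
  by (simp add: funpow_shift glue_def)

lemma measurable_glue:
  "(\<lambda>p. glue N (fst p) (snd p)) \<in> OmegaM m \<Otimes>\<^sub>M OmegaM m \<rightarrow>\<^sub>M OmegaM m"
proof (rule measurable_OmegaM)
  show "(\<lambda>p. glue N (fst p) (snd p) i) \<in> OmegaM m \<Otimes>\<^sub>M OmegaM m \<rightarrow>\<^sub>M count_space {1..m}" for i
    using measurable_compose[OF measurable_fst measurable_component_OmegaM]
      measurable_compose[OF measurable_snd measurable_component_OmegaM]
    by (cases "i < N") (simp_all add: glue_def)
qed (auto simp: space_pair_measure space_OmegaM Omega_def glue_def)

lemma d_Omega_nonneg: "0 \<le> d_Omega x y"
  by (simp add: d_Omega_def)

lemma d_Omega_le_half: "d_Omega x y \<le> 1/2"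
  by (simp add: d_Omega_def power_le_one)

lemma d_Omega_le_if_eq_prefix:
  assumes "\<And>i. i < n \<Longrightarrow> x i = y i"
  shows "d_Omega x y \<le> (1/2) ^ n"
proof (cases "x = y")
  case False
  define k where "k = (LEAST i. x i \<noteq> y i)"
  from False have "\<exists>i. x i \<noteq> y i" by auto
  then have "x k \<noteq> y k" unfolding k_def by (rule LeastI_ex)
  then have "n \<le> k" using assms not_le by blast
  then have "(1/2::real) ^ Suc k \<le> (1/2) ^ n" by (intro power_decreasing) auto
  then show ?thesis using False by (simp add: d_Omega_def k_def)
qed (simp add: d_Omega_def)

lemma lip1_const: "lip1 m (\<lambda>_. c)"
  by (simp add: lip1_def d_Omega_nonneg)

lemma lip1_bounded:
  assumes "lip1 m f" "x \<in> Omega m" "x0 \<in> Omega m"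
  shows "\<bar>f x\<bar> \<le> \<bar>f x0\<bar> + 1/2"
  using assms d_Omega_le_half[of x x0] unfolding lip1_def by force

lemma lip1_borel_measurable:
  assumes "lip1 m f"
  shows "f \<in> borel_measurable (OmegaM m)"
proof (rule borel_measurable_LIMSEQ_real)
  \<comment> \<open>\<open>trunc n x\<close> depends only on a finite prefix of \<open>x\<close>, whose values form a countable space.\<close>
  define trunc where "trunc n x = (\<lambda>i. x (if i < n then i else 0))" for n and x :: "nat \<Rightarrow> nat"
  have eq: "(\<lambda>x. f (trunc n x)) = (\<lambda>x. (\<lambda>l. f (\<lambda>i. l ! (if i < n then i else 0))) (map x [0..<Suc n]))"
    for n by (auto simp: trunc_def simp del: upt_Suc intro!: arg_cong[where f=f])
  show "(\<lambda>x. f (trunc n x)) \<in> borel_measurable (OmegaM m)" for n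
    unfolding eq by (rule measurable_compose[OF measurable_prefix]) simp
  fix x assume "x \<in> space (OmegaM m)"
  then have x: "x \<in> Omega m" by (simp add: space_OmegaM)
  have bound: "norm (f (trunc n x) - f x) \<le> (1/2) ^ n" for n
  proof -
    have "trunc n x \<in> Omega m" using x by (auto simp: Omega_def trunc_def)
    then have "\<bar>f (trunc n x) - f x\<bar> \<le> d_Omega (trunc n x) x"
      using assms x by (auto simp: lip1_def)
    also have "\<dots> \<le> (1/2) ^ n" by (rule d_Omega_le_if_eq_prefix) (simp add: trunc_def)
    finally show ?thesis by simp
  qed
  have "(\<lambda>n. f (trunc n x) - f x) \<longlonglongrightarrow> 0"
    by (rule Lim_null_comparison[OF always_eventually[OF allI[OF bound]]])
      (simp add: LIMSEQ_power_zero)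
  then show "(\<lambda>n. f (trunc n x)) \<longlonglongrightarrow> f x"
    by (simp add: LIM_zero_iff)
qed

lemma lip1_integrable:
  assumes "\<mu> \<in> probs m" "lip1 m f"
  shows "integrable \<mu> f"
proof -
  interpret prob_space \<mu> using assms(1) by (simp add: probs_def)
  have sets: "sets \<mu> = sets (OmegaM m)" using assms(1) by (simp add: probs_def)
  have space: "space \<mu> = Omega m"
    using sets_eq_imp_space_eq[OF sets] by (simp add: space_OmegaM)
  obtain x0 where "x0 \<in> Omega m" using not_empty space by blast
  show ?thesis
  proof (rule integrable_const_bound[where B="\<bar>f x0\<bar> + 1/2"])
    show "AE x in \<mu>. norm (f x) \<le> \<bar>f x0\<bar> + 1/2"
      using lip1_bounded[OF assms(2) _ \<open>x0 \<in> Omega m\<close>] space by (auto intro!: AE_I2)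
    show "f \<in> borel_measurable \<mu>"
      using lip1_borel_measurable[OF assms(2)] measurable_cong_sets[OF sets refl] by blast
  qed
qed

lemma d_MK_self: "d_MK m \<mu> \<mu> = 0"
proof -
  have "{(\<integral>x. f x \<partial>\<mu>) - (\<integral>x. f x \<partial>\<mu>) | f. lip1 m f} = {0}"
    using lip1_const[of m 0] by auto
  then show ?thesis by (simp add: d_MK_def)
qed

lemma d_MK_le:
  assumes "\<And>f. lip1 m f \<Longrightarrow> (\<integral>x. f x \<partial>\<mu>) - (\<integral>x. f x \<partial>\<nu>) \<le> c"
  shows "d_MK m \<mu> \<nu> \<le> c"
  unfolding d_MK_def using lip1_const[of m 0] assms by (intro cSup_least) auto

lemma d_MK_coupling_le:
  assumes "prob_space P" "X \<in> P \<rightarrow>\<^sub>M OmegaM m" "Y \<in> P \<rightarrow>\<^sub>M OmegaM m"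
    and "\<And>p. p \<in> space P \<Longrightarrow> d_Omega (X p) (Y p) \<le> c"
  shows "d_MK m (distr P (OmegaM m) X) (distr P (OmegaM m) Y) \<le> c"
proof (rule d_MK_le)
  interpret prob_space P by fact
  fix f assume f: "lip1 m f"
  have fm: "f \<in> borel_measurable (OmegaM m)" by (rule lip1_borel_measurable[OF f])
  have integrable: "integrable P (\<lambda>p. f (Z p))" if Z: "Z \<in> P \<rightarrow>\<^sub>M OmegaM m" for Z
    using lip1_integrable[OF _ f, of "distr P (OmegaM m) Z"] prob_space_distr[OF Z]
    by (simp add: probs_def integrable_distr_eq[OF Z fm])
  have "(\<integral>x. f x \<partial>distr P (OmegaM m) X) - (\<integral>x. f x \<partial>distr P (OmegaM m) Y)
      = (\<integral>p. f (X p) - f (Y p) \<partial>P)"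
    using assms(2,3) integrable by (simp add: integral_distr[OF _ fm])
  also have "\<dots> \<le> (\<integral>p. c \<partial>P)"
  proof (rule integral_mono)
    fix p assume p: "p \<in> space P"
    have "X p \<in> Omega m" "Y p \<in> Omega m"
      using measurable_space[OF assms(2) p] measurable_space[OF assms(3) p] by (simp_all add: space_OmegaM)
    then show "f (X p) - f (Y p) \<le> c"
      using f assms(4)[OF p] unfolding lip1_def by force
  qed (use assms(2,3) integrable in simp_all)
  also have "\<dots> = c" by (simp add: prob_space)
  finally show "(\<integral>x. f x \<partial>distr P (OmegaM m) X) - (\<integral>x. f x \<partial>distr P (OmegaM m) Y) \<le> c" .
qed

lemma distr_pair_snd:
  assumes "prob_space M" "prob_space N"
  shows "distr (M \<Otimes>\<^sub>M N) N snd = N"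
proof (rule measure_eqI)
  interpret M: prob_space M by fact
  interpret N: prob_space N by fact
  fix A assume A: "A \<in> sets (distr (M \<Otimes>\<^sub>M N) N snd)"
  then have "emeasure (distr (M \<Otimes>\<^sub>M N) N snd) A = emeasure (M \<Otimes>\<^sub>M N) (space M \<times> A)"
    by (auto simp: emeasure_distr space_pair_measure dest: sets.sets_into_space
        intro!: arg_cong2[where f=emeasure])
  with A show "emeasure (distr (M \<Otimes>\<^sub>M N) N snd) A = emeasure N A"
    by (simp add: N.emeasure_pair_measure_Times M.emeasure_space_1)
qed simp

definition glue_measure ::
    "nat \<Rightarrow> nat \<Rightarrow> (nat \<Rightarrow> nat) measure \<Rightarrow> (nat \<Rightarrow> nat) measure \<Rightarrow> (nat \<Rightarrow> nat) measure" where
  "glue_measure m N \<mu> \<nu> = distr (\<mu> \<Otimes>\<^sub>M \<nu>) (OmegaM m) (\<lambda>p. glue N (fst p) (snd p))"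

lemma sets_pair_probs:
  assumes "\<mu> \<in> probs m" "\<nu> \<in> probs m"
  shows "sets (\<mu> \<Otimes>\<^sub>M \<nu>) = sets (OmegaM m \<Otimes>\<^sub>M OmegaM m)"
  using assms by (intro sets_pair_measure_cong) (simp_all add: probs_def)

lemma prob_space_pair_probs:
  assumes "\<mu> \<in> probs m" "\<nu> \<in> probs m"
  shows "prob_space (\<mu> \<Otimes>\<^sub>M \<nu>)"
  using assms by (intro prob_space_pair) (simp_all add: probs_def)

lemma measurable_glue_pair_probs:
  assumes "\<mu> \<in> probs m" "\<nu> \<in> probs m"
  shows "(\<lambda>p. glue N (fst p) (snd p)) \<in> \<mu> \<Otimes>\<^sub>M \<nu> \<rightarrow>\<^sub>M OmegaM m"
  using measurable_glue measurable_cong_sets[OF sets_pair_probs[OF assms] refl] by blast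

lemma glue_measure_in_probs:
  assumes "\<mu> \<in> probs m" "\<nu> \<in> probs m"
  shows "glue_measure m N \<mu> \<nu> \<in> probs m"
  using prob_space.prob_space_distr[OF prob_space_pair_probs[OF assms] measurable_glue_pair_probs[OF assms]]
  by (simp add: probs_def glue_measure_def)

lemma pushT_funpow_glue_measure:
  assumes "\<mu> \<in> probs m" "\<nu> \<in> probs m"
  shows "(pushT m ^^ N) (glue_measure m N \<mu> \<nu>) = \<nu>"
proof -
  have "(pushT m ^^ N) (glue_measure m N \<mu> \<nu>)
      = distr (\<mu> \<Otimes>\<^sub>M \<nu>) (OmegaM m) ((shift ^^ N) \<circ> (\<lambda>p. glue N (fst p) (snd p)))"
    by (simp add: glue_measure_def pushT_funpow distr_distr[OF measurable_funpow_shift measurable_glue_pair_probs[OF assms]])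
  also have "\<dots> = distr (\<mu> \<Otimes>\<^sub>M \<nu>) \<nu> snd"
    using assms(2) by (intro distr_cong) (simp_all add: funpow_shift_glue probs_def)
  also have "\<dots> = \<nu>"
    using assms by (intro distr_pair_snd) (simp_all add: probs_def)
  finally show ?thesis .
qed

lemma d_MK_glue_measure_le:
  assumes "\<mu> \<in> probs m" "\<nu> \<in> probs m"
  shows "d_MK m (glue_measure m N \<mu> \<nu>) \<mu> \<le> (1/2) ^ N"
proof -
  have "\<mu> = distr (\<mu> \<Otimes>\<^sub>M \<nu>) \<mu> fst"
    using assms(2) by (intro prob_space.distr_pair_fst[symmetric]) (simp add: probs_def)
  also have "\<dots> = distr (\<mu> \<Otimes>\<^sub>M \<nu>) (OmegaM m) fst"
    using assms(1) by (intro distr_cong) (simp_all add: probs_def)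
  finally have marginal: "\<mu> = distr (\<mu> \<Otimes>\<^sub>M \<nu>) (OmegaM m) fst" .
  have "d_MK m (glue_measure m N \<mu> \<nu>) (distr (\<mu> \<Otimes>\<^sub>M \<nu>) (OmegaM m) fst) \<le> (1/2) ^ N"
    unfolding glue_measure_def
  proof (rule d_MK_coupling_le)
    show "(\<lambda>p. glue N (fst p) (snd p)) \<in> \<mu> \<Otimes>\<^sub>M \<nu> \<rightarrow>\<^sub>M OmegaM m"
      using assms by (rule measurable_glue_pair_probs)
    show "fst \<in> \<mu> \<Otimes>\<^sub>M \<nu> \<rightarrow>\<^sub>M OmegaM m"
      using measurable_fst measurable_cong_sets[OF sets_pair_probs[OF assms] refl] by blast
    show "d_Omega (glue N (fst p) (snd p)) (fst p) \<le> (1/2) ^ N" for p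
      by (rule d_Omega_le_if_eq_prefix) (simp add: glue_def)
  qed (rule prob_space_pair_probs[OF assms])
  then show ?thesis
    by (simp only: marginal[symmetric])
qed

theorem theorem2p8:
  fixes m :: nat and \<epsilon> :: real and mu1' mu2' :: "(nat \<Rightarrow> nat) measure"
  assumes "\<epsilon> > 0"
    and "mu2' \<in> probs m"
    and "mu1' \<in> probs m" and "shift_invariant m mu1'"
  shows "\<exists>rho1 \<in> probs m. \<exists>mu2 \<in> probs m. \<exists>N::nat. N > 0 \<and>
           d_MK m rho1 mu1' < \<epsilon> \<and> d_MK m mu2 mu2' < \<epsilon> \<and> (pushT m ^^ N) rho1 = mu2"
proof -
  obtain n where "(1/2::real) ^ n < \<epsilon>"
    using real_arch_pow_inv[OF assms(1), of "1/2"] by auto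
  moreover have "(1/2::real) ^ Suc n \<le> (1/2) ^ n"
    by (intro power_decreasing) auto
  ultimately have "(1/2::real) ^ Suc n < \<epsilon>"
    by linarith
  then have "d_MK m (glue_measure m (Suc n) mu1' mu2') mu1' < \<epsilon>"
    by (rule le_less_trans[OF d_MK_glue_measure_le[OF assms(3,2)]])
  moreover have "d_MK m mu2' mu2' < \<epsilon>"
    using assms(1) by (simp add: d_MK_self)
  ultimately show ?thesis
    using glue_measure_in_probs[OF assms(3,2)] pushT_funpow_glue_measure[OF assms(3,2)] assms(2)
    by (meson zero_less_Suc)
qed

end
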